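(* Let $\Omega\subset\mathbb{R}^d$ be a bounded Lipschitz domain with an oriented Whitney covering $\mathcal W$, let $b>a>d-1$ and let $Q\in\mathcal W$. Then $$\sum_{S\in\mathcal W}\frac{\ell(S)^a}{\mathrm D(Q,S)^b}\le C\,\ell(Q)^{a-b},$$ with $C$ depending only on $a$, $b$ and $d$.
   Context: A Whitney covering of $\Omega$ is a family $\mathcal W$ of dyadic cubes with pairwise disjoint interiors whose union is $\Omega$, with $C_{\mathcal W}\ell(Q)\le\operatorname{dist}(Q,\partial\Omega)\le4C_{\mathcal W}\ell(Q)$, neighbouring cubes satisfying $\ell(Q)\le2\ell(S)$, and $\sum_{Q}\chi_{10Q}\le C$. An oriented Whitney covering is such a covering (with suitably chosen Whitney constants) together with a finite family of boundary windows of the Lipschitz domain, a distinguished central cube and a chain structure connecting cubes; only the cubes enter this statement. $\ell(Q)$ is the side length and $\mathrm D(Q,S)=\ell(Q)+\ell(S)+\operatorname{dist}(Q,S)$ is the long distance. *)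

theory Defs
  imports "HOL-Analysis.Analysis"
begin

text \<open>Closed dyadic cube of generation m with integer corner index k (only k on Basis matters).\<close>
definition dyad :: "int \<Rightarrow> ('a::euclidean_space \<Rightarrow> int) \<Rightarrow> 'a set" where
  "dyad m k = {x. \<forall>i\<in>Basis. of_int (k i) * 2 powr (- real_of_int m) \<le> x \<bullet> i
                          \<and> x \<bullet> i \<le> (of_int (k i) + 1) * 2 powr (- real_of_int m)}"

definition dyadic_cube :: "'a::euclidean_space set \<Rightarrow> bool" where
  "dyadic_cube Q \<longleftrightarrow> (\<exists>m k. Q = dyad m k)"

definition sidelen :: "'a::euclidean_space set \<Rightarrow> real" where
  "sidelen Q = (THE s. \<exists>m k. Q = dyad m k \<and> s = 2 powr (- real_of_int m))"

definition cube_dilate :: "real \<Rightarrow> 'a::euclidean_space set \<Rightarrow> 'a set" where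
  "cube_dilate t Q = {x. \<exists>m k. Q = dyad m k \<and>
      (\<forall>i\<in>Basis. \<bar>x \<bullet> i - (of_int (k i) + 1/2) * 2 powr (- real_of_int m)\<bar>
                   \<le> t / 2 * 2 powr (- real_of_int m))}"

definition long_dist :: "'a::euclidean_space set \<Rightarrow> 'a set \<Rightarrow> real" where
  "long_dist Q S = sidelen Q + sidelen S + setdist Q S"

definition lipschitz_domain :: "'a::euclidean_space set \<Rightarrow> bool" where
  "lipschitz_domain \<Omega> \<longleftrightarrow> open \<Omega> \<and> connected \<Omega> \<and> \<Omega> \<noteq> {} \<and> bounded \<Omega> \<and>
    (\<forall>p\<in>frontier \<Omega>. \<exists>e r h \<phi> M. norm e = 1 \<and> r > 0 \<and> h > 0 \<and>
        M-lipschitz_on {y. y \<bullet> e = 0} (\<phi> :: 'a \<Rightarrow> real) \<and>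
        (\<forall>y. y \<bullet> e = 0 \<longrightarrow> norm (y - (p - (p \<bullet> e) *\<^sub>R e)) < r \<longrightarrow> \<bar>\<phi> y - p \<bullet> e\<bar> < h / 2) \<and>
        (\<forall>x. norm ((x - (x \<bullet> e) *\<^sub>R e) - (p - (p \<bullet> e) *\<^sub>R e)) < r \<longrightarrow> \<bar>x \<bullet> e - p \<bullet> e\<bar> < h \<longrightarrow>
             (x \<in> \<Omega> \<longleftrightarrow> x \<bullet> e > \<phi> (x - (x \<bullet> e) *\<^sub>R e))))"

definition whitney_covering :: "'a::euclidean_space set \<Rightarrow> 'a set set \<Rightarrow> bool" where
  "whitney_covering \<Omega> W \<longleftrightarrow>
    (\<forall>Q\<in>W. dyadic_cube Q) \<and>
    (\<forall>Q\<in>W. \<forall>S\<in>W. Q \<noteq> S \<longrightarrow> interior Q \<inter> interior S = {}) \<and>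
    \<Union>W = \<Omega> \<and>
    (\<exists>CW>0. \<forall>Q\<in>W. CW * sidelen Q \<le> setdist Q (frontier \<Omega>) \<and>
                    setdist Q (frontier \<Omega>) \<le> 4 * CW * sidelen Q) \<and>
    (\<forall>Q\<in>W. \<forall>S\<in>W. Q \<inter> S \<noteq> {} \<longrightarrow> sidelen Q \<le> 2 * sidelen S) \<and>
    (\<exists>N::nat. \<forall>x. finite {Q\<in>W. x \<in> cube_dilate 10 Q} \<and> card {Q\<in>W. x \<in> cube_dilate 10 Q} \<le> N)"

end

theory Submission
  imports Defs
begin

text \<open>In a Lipschitz chart the height of a point above the graph is comparable to its distance
  to the frontier, so Whitney cubes of side \<open>s\<close> lie in a layer of height \<open>\<approx> s\<close> above the
  graph. Sliding this layer along the chart direction shows that at most \<open>\<approx> (R / s)\<^sup>d\<^sup>-\<^sup>1\<close> such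
  cubes meet a ball of radius \<open>R\<close>; as \<open>a > d - 1\<close>, summing \<open>\<ell>(S)\<^sup>a\<close> over the dyadic sizes
  inside such a ball gives \<open>O(R\<^sup>a)\<close>. Grouping the cubes \<open>S\<close> by the dyadic size \<open>2\<^sup>j \<ell>(Q)\<close> of
  \<open>D(Q, S)\<close> then bounds the sum by \<open>\<Sum>\<^sub>j (2\<^sup>j \<ell>(Q))\<^sup>a\<^sup>-\<^sup>b\<close>, a geometric series as \<open>a < b\<close>.\<close>

section \<open>Dyadic cubes\<close>

definition dyad_lo :: "int \<Rightarrow> ('a::euclidean_space \<Rightarrow> int) \<Rightarrow> 'a" where
  "dyad_lo m k = (\<Sum>i\<in>Basis. (of_int (k i) * 2 powr (- real_of_int m)) *\<^sub>R i)"

definition dyad_hi :: "int \<Rightarrow> ('a::euclidean_space \<Rightarrow> int) \<Rightarrow> 'a" where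
  "dyad_hi m k = (\<Sum>i\<in>Basis. ((of_int (k i) + 1) * 2 powr (- real_of_int m)) *\<^sub>R i)"

lemma inner_dyad_lo: "i \<in> Basis \<Longrightarrow> dyad_lo m k \<bullet> i = of_int (k i) * 2 powr (- real_of_int m)"
  by (simp add: dyad_lo_def)

lemma inner_dyad_hi: "i \<in> Basis \<Longrightarrow> dyad_hi m k \<bullet> i = (of_int (k i) + 1) * 2 powr (- real_of_int m)"
  by (simp add: dyad_hi_def)

lemma dyad_eq_cbox: "dyad m k = cbox (dyad_lo m k) (dyad_hi m k)"
  by (auto simp: dyad_def mem_box inner_dyad_lo inner_dyad_hi)

lemma dyad_lo_in_dyad: "dyad_lo m k \<in> dyad m k"
  and dyad_hi_in_dyad: "dyad_hi m k \<in> dyad m k"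
  by (auto simp: dyad_eq_cbox mem_box inner_dyad_lo inner_dyad_hi)

lemma dyad_nonempty: "dyad m k \<noteq> {}"
  using dyad_lo_in_dyad by blast

lemma compact_dyad: "compact (dyad m k)"
  by (simp add: dyad_eq_cbox)

lemma dyad_eq_imp_generation_eq:
  assumes "dyad m k = (dyad m' k' :: 'a::euclidean_space set)"
  shows "m = m'"
proof -
  obtain i :: 'a where i: "i \<in> Basis"
    using nonempty_Basis by blast
  have "dyad_lo m k \<in> dyad m' k'" "dyad_hi m k \<in> dyad m' k'"
    by (simp_all add: dyad_lo_in_dyad dyad_hi_in_dyad flip: assms)
  moreover have "dyad_lo m' k' \<in> dyad m k" "dyad_hi m' k' \<in> dyad m k"
    by (simp_all add: dyad_lo_in_dyad dyad_hi_in_dyad assms)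
  ultimately have "dyad_lo m k \<bullet> i = dyad_lo m' k' \<bullet> i" "dyad_hi m k \<bullet> i = dyad_hi m' k' \<bullet> i"
    using i by (auto simp: dyad_eq_cbox mem_box intro: order.antisym)
  then have "(2::real) powr (- real_of_int m) = 2 powr (- real_of_int m')"
    using i by (simp add: inner_dyad_lo inner_dyad_hi algebra_simps)
  then show ?thesis
    by (simp add: powr_inj)
qed

lemma sidelen_dyad: "sidelen (dyad m k) = 2 powr (- real_of_int m)"
  unfolding sidelen_def by (rule the_equality) (auto dest: dyad_eq_imp_generation_eq)

lemma sidelen_dyad_pos: "0 < sidelen (dyad m k)"
  by (simp add: sidelen_dyad)

lemma measure_dyad:
  "measure lebesgue (dyad m k :: 'a::euclidean_space set) = sidelen (dyad m k) ^ DIM('a)"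
proof -
  have "measure lebesgue (dyad m k :: 'a set) = measure lborel (cbox (dyad_lo m k) (dyad_hi m k) :: 'a set)"
    by (simp add: dyad_eq_cbox)
  also have "\<dots> = (\<Prod>i\<in>(Basis::'a set). 2 powr (- real_of_int m))"
    by (subst measure_lborel_cbox_eq) (auto simp: inner_dyad_lo inner_dyad_hi algebra_simps)
  finally show ?thesis
    by (simp add: sidelen_dyad)
qed

lemma dist_le_sidelen_dyad:
  assumes "x \<in> dyad m k" "y \<in> dyad m k"
  shows "dist x y \<le> real DIM('a) * sidelen (dyad m k :: 'a::euclidean_space set)"
proof -
  have "dist x y \<le> (\<Sum>i\<in>(Basis::'a set). \<bar>(x - y) \<bullet> i\<bar>)"
    by (simp add: dist_norm norm_le_l1)
  also have "\<dots> \<le> (\<Sum>i\<in>(Basis::'a set). 2 powr (- real_of_int m))"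
  proof (rule sum_mono)
    fix i :: 'a
    assume i: "i \<in> Basis"
    then show "\<bar>(x - y) \<bullet> i\<bar> \<le> 2 powr (- real_of_int m)"
      using assms by (auto simp: dyad_def abs_le_iff algebra_simps dest!: bspec[OF _ i])
  qed
  finally show ?thesis
    by (simp add: sidelen_dyad)
qed

lemma negligible_Int_dyad:
  assumes "interior (dyad m k) \<inter> interior (dyad m' k') = {}"
  shows "negligible (dyad m k \<inter> dyad m' k' :: 'a::euclidean_space set)"
proof (rule negligible_subset)
  show "negligible (frontier (dyad m k) \<union> frontier (dyad m' k' :: 'a set))"
    by (simp add: dyad_eq_cbox frontier_cbox negligible_frontier_interval)
  show "dyad m k \<inter> dyad m' k' \<subseteq> frontier (dyad m k) \<union> frontier (dyad m' k')"
    using assms by (auto simp: frontier_def compact_imp_closed compact_dyad)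
qed

definition generation :: "'a::euclidean_space set \<Rightarrow> int" where
  "generation S = (THE m. \<exists>k. S = dyad m k)"

lemma generation_dyad: "generation (dyad m k) = m"
  unfolding generation_def by (rule the_equality) (auto dest: dyad_eq_imp_generation_eq)

lemma sidelen_eq_generation:
  "dyadic_cube S \<Longrightarrow> sidelen S = 2 powr (- real_of_int (generation S))"
  by (auto simp: dyadic_cube_def generation_dyad sidelen_dyad)

section \<open>Lipschitz charts\<close>

lemma setdist_frontier_le_dist:
  fixes x y :: "'a::euclidean_space"
  assumes "x \<in> \<Omega>" "y \<notin> \<Omega>"
  shows "setdist {x} (frontier \<Omega>) \<le> dist x y"
proof -
  obtain z where z: "z \<in> closed_segment x y" "z \<in> frontier \<Omega>"
    using connected_Int_frontier[of "closed_segment x y" \<Omega>] assms by auto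
  have "setdist {x} (frontier \<Omega>) \<le> dist x z"
    using z by (intro setdist_le_dist) auto
  also have "\<dots> \<le> dist x y"
    using dist_in_closed_segment[OF z(1)] by (simp add: dist_commute)
  finally show ?thesis .
qed

lemma le_setdist_frontier_if_ball_subset:
  fixes x :: "'a::euclidean_space"
  assumes "open \<Omega>" "frontier \<Omega> \<noteq> {}" "ball x \<rho> \<subseteq> \<Omega>"
  shows "\<rho> \<le> setdist {x} (frontier \<Omega>)"
proof (rule le_setdistI)
  fix u z
  assume "u \<in> {x}" "z \<in> frontier \<Omega>"
  then show "\<rho> \<le> dist u z"
    using assms frontier_disjoint_eq by (fastforce simp: dist_commute)
qed (use assms in auto)

definition proj_perp :: "'a::real_inner \<Rightarrow> 'a \<Rightarrow> 'a" where
  "proj_perp e x = x - (x \<bullet> e) *\<^sub>R e"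

lemma inner_proj_perp_unit: "norm e = 1 \<Longrightarrow> proj_perp e x \<bullet> e = 0"
  by (simp add: proj_perp_def inner_diff_left dot_square_norm)

lemma proj_perp_add_scaleR: "norm e = 1 \<Longrightarrow> proj_perp e (x + t *\<^sub>R e) = proj_perp e x"
  by (simp add: proj_perp_def dot_square_norm algebra_simps)

lemma norm_proj_perp_le:
  assumes "norm e = 1"
  shows "norm (proj_perp e v) \<le> norm v"
proof -
  have "e \<bullet> e = 1"
    using assms by (simp add: dot_square_norm)
  then have "proj_perp e v \<bullet> proj_perp e v = v \<bullet> v - (v \<bullet> e)\<^sup>2"
    unfolding proj_perp_def inner_diff_left inner_diff_right inner_scaleR_left inner_scaleR_right
    by (simp add: inner_commute power2_eq_square)
  then show ?thesis
    by (simp add: norm_le)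
qed

lemma dist_proj_perp_le: "norm e = 1 \<Longrightarrow> dist (proj_perp e x) (proj_perp e y) \<le> dist x y"
  using norm_proj_perp_le[of e "x - y"]
  by (simp add: dist_norm proj_perp_def algebra_simps)

lemma abs_inner_diff_le_dist: "norm e = 1 \<Longrightarrow> \<bar>x \<bullet> e - y \<bullet> e\<bar> \<le> dist x y"
  by (metis Cauchy_Schwarz_ineq2 dist_norm inner_diff_left mult.right_neutral)

definition cylinder :: "'a::real_inner \<Rightarrow> 'a \<Rightarrow> real \<Rightarrow> real \<Rightarrow> 'a set" where
  "cylinder e p r h = {x. norm (proj_perp e x - proj_perp e p) < r \<and> \<bar>x \<bullet> e - p \<bullet> e\<bar> < h}"

lemma open_cylinder: "open (cylinder e p r h :: 'a::euclidean_space set)"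
  unfolding cylinder_def proj_perp_def
  by (intro open_Collect_conj open_Collect_less continuous_intros)

lemma center_in_cylinder: "0 < r \<Longrightarrow> 0 < h \<Longrightarrow> p \<in> cylinder e p r h"
  by (simp add: cylinder_def)

lemma cylinder_near:
  assumes "norm e = 1" "x \<in> cylinder e p r h" "dist x y \<le> \<rho>"
  shows "y \<in> cylinder e p (r + \<rho>) (h + \<rho>)"
proof -
  have "norm (proj_perp e y - proj_perp e p)
      \<le> dist (proj_perp e y) (proj_perp e x) + norm (proj_perp e x - proj_perp e p)"
    by (metis dist_norm dist_triangle)
  moreover have "\<bar>y \<bullet> e - p \<bullet> e\<bar> \<le> \<bar>y \<bullet> e - x \<bullet> e\<bar> + \<bar>x \<bullet> e - p \<bullet> e\<bar>"
    by linarith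
  ultimately show ?thesis
    using assms dist_proj_perp_le[of e y x] abs_inner_diff_le_dist[of e y x]
    by (auto simp: cylinder_def dist_commute)
qed

lemma subset_half_cylinder_if_near:
  assumes "norm e = 1" "z \<in> cylinder e p (r / 4) (h / 4)"
    and "\<And>x. x \<in> S \<Longrightarrow> dist x z \<le> \<rho>" "\<rho> \<le> r / 4" "\<rho> \<le> h / 4"
  shows "S \<subseteq> cylinder e p (r / 2) (h / 2)"
proof
  fix x
  assume "x \<in> S"
  then have "x \<in> cylinder e p (r / 4 + \<rho>) (h / 4 + \<rho>)"
    using cylinder_near[OF assms(1,2)] assms(3) by (simp add: dist_commute)
  then show "x \<in> cylinder e p (r / 2) (h / 2)"
    using assms(4,5) by (auto simp: cylinder_def)
qed

definition graph_height :: "'a::real_inner \<Rightarrow> ('a \<Rightarrow> real) \<Rightarrow> 'a \<Rightarrow> real" where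
  "graph_height e \<phi> x = x \<bullet> e - \<phi> (proj_perp e x)"

lemma graph_height_add_scaleR:
  "norm e = 1 \<Longrightarrow> graph_height e \<phi> (x + t *\<^sub>R e) = graph_height e \<phi> x + t"
  by (simp add: graph_height_def proj_perp_add_scaleR inner_add_left dot_square_norm)

locale lipschitz_chart =
  fixes \<Omega> :: "'a::euclidean_space set" and p e :: 'a and r h M :: real and \<phi> :: "'a \<Rightarrow> real"
  assumes unit: "norm e = 1" and r_pos: "0 < r" and h_pos: "0 < h"
    and lipschitz: "M-lipschitz_on {y. y \<bullet> e = 0} \<phi>"
    and graph_near: "\<And>y. y \<bullet> e = 0 \<Longrightarrow> norm (y - proj_perp e p) < r \<Longrightarrow> \<bar>\<phi> y - p \<bullet> e\<bar> < h / 2"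
    and domain_above_graph: "\<And>x. x \<in> cylinder e p r h \<Longrightarrow> x \<in> \<Omega> \<longleftrightarrow> 0 < graph_height e \<phi> x"
begin

lemma unit_inner_self: "e \<bullet> e = 1"
  using unit by (simp add: dot_square_norm)

lemma lipschitz_nonneg: "0 \<le> M"
  using lipschitz lipschitz_on_nonneg by blast

lemma graph_height_lipschitz: "graph_height e \<phi> x - graph_height e \<phi> y \<le> (1 + M) * dist x y"
proof -
  have "\<phi> (proj_perp e y) - \<phi> (proj_perp e x) \<le> M * dist (proj_perp e y) (proj_perp e x)"
    using lipschitz_onD[OF lipschitz, of "proj_perp e y" "proj_perp e x"]
    by (simp add: inner_proj_perp_unit[OF unit] dist_real_def)
  also have "\<dots> \<le> M * dist x y"
    using dist_proj_perp_le[OF unit, of y x] lipschitz_nonneg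
    by (simp add: dist_commute mult_left_mono)
  finally show ?thesis
    using abs_inner_diff_le_dist[OF unit, of x y] by (simp add: graph_height_def algebra_simps)
qed

lemma setdist_frontier_le_graph_height:
  assumes "x \<in> \<Omega>" "x \<in> cylinder e p (r / 2) (h / 2)"
  shows "setdist {x} (frontier \<Omega>) \<le> graph_height e \<phi> x"
proof -
  define g where "g = x + (- graph_height e \<phi> x) *\<^sub>R e"
  have "\<bar>\<phi> (proj_perp e x) - p \<bullet> e\<bar> < h / 2"
    using assms(2) r_pos by (intro graph_near) (auto simp: cylinder_def inner_proj_perp_unit[OF unit])
  then have "g \<in> cylinder e p r h"
    using assms(2) r_pos h_pos
    by (auto simp: g_def cylinder_def proj_perp_add_scaleR[OF unit] graph_height_def
        inner_add_left unit_inner_self)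
  moreover have "graph_height e \<phi> g = 0"
    using graph_height_add_scaleR[OF unit, of \<phi> x "- graph_height e \<phi> x"] by (simp add: g_def)
  ultimately have "g \<notin> \<Omega>"
    using domain_above_graph by simp
  then have "setdist {x} (frontier \<Omega>) \<le> dist x g"
    by (rule setdist_frontier_le_dist[OF assms(1)])
  also have "dist x g = graph_height e \<phi> x"
    using assms r_pos h_pos domain_above_graph[of x] unit by (auto simp: g_def dist_norm cylinder_def)
  finally show ?thesis .
qed

lemma ball_subset_domain:
  assumes "x \<in> cylinder e p (r / 2) (h / 2)" "\<rho> \<le> r / 2" "\<rho> \<le> h / 2"
    and "(1 + M) * \<rho> \<le> graph_height e \<phi> x"
  shows "ball x \<rho> \<subseteq> \<Omega>"
proof
  fix y
  assume "y \<in> ball x \<rho>"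
  then have y: "dist x y < \<rho>"
    by simp
  have "y \<in> cylinder e p (r / 2 + \<rho>) (h / 2 + \<rho>)"
    using cylinder_near[OF unit assms(1), of y \<rho>] y by simp
  then have "y \<in> cylinder e p r h"
    using assms(2,3) by (auto simp: cylinder_def)
  moreover have "(1 + M) * dist y x < (1 + M) * \<rho>"
    using y lipschitz_nonneg by (simp add: dist_commute)
  then have "0 < graph_height e \<phi> y"
    using graph_height_lipschitz[of x y] assms(4) y by (simp add: dist_commute)
  ultimately show "y \<in> \<Omega>"
    using domain_above_graph by blast
qed

lemma graph_height_le_setdist_frontier:
  assumes "open \<Omega>" "frontier \<Omega> \<noteq> {}" "x \<in> cylinder e p (r / 2) (h / 2)"
    and "setdist {x} (frontier \<Omega>) < min r h / 2"
  shows "graph_height e \<phi> x \<le> (1 + M) * setdist {x} (frontier \<Omega>)"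
proof (rule ccontr)
  define \<delta> where "\<delta> = setdist {x} (frontier \<Omega>)"
  define \<rho> where "\<rho> = min (graph_height e \<phi> x / (1 + M)) (min r h / 2)"
  assume "\<not> graph_height e \<phi> x \<le> (1 + M) * setdist {x} (frontier \<Omega>)"
  then have "\<delta> < graph_height e \<phi> x / (1 + M)"
    using lipschitz_nonneg by (simp add: \<delta>_def field_simps)
  then have "\<delta> < \<rho>"
    using assms(4) by (simp add: \<rho>_def \<delta>_def)
  moreover have "\<rho> \<le> graph_height e \<phi> x / (1 + M)"
    by (simp add: \<rho>_def)
  then have "ball x \<rho> \<subseteq> \<Omega>"
    using assms(3) lipschitz_nonneg
    by (intro ball_subset_domain) (auto simp: \<rho>_def le_divide_eq mult.commute)
  then have "\<rho> \<le> \<delta>"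
    unfolding \<delta>_def by (rule le_setdist_frontier_if_ball_subset[OF assms(1,2)])
  ultimately show False
    by simp
qed

end

lemma lipschitz_domain_imp_charts:
  assumes "lipschitz_domain \<Omega>"
  shows "\<forall>p\<in>frontier \<Omega>. \<exists>e r h M \<phi>. lipschitz_chart \<Omega> p e r h M \<phi>"
  using assms unfolding lipschitz_domain_def lipschitz_chart_def cylinder_def graph_height_def proj_perp_def
  by fastforce

section \<open>Packing and dyadic sums\<close>

lemma measure_cball_le:
  fixes x0 :: "'a::euclidean_space"
  assumes "0 \<le> \<rho>"
  shows "measure lebesgue (cball x0 \<rho>) \<le> (2 * \<rho>) ^ DIM('a)"
proof -
  define B where "B = cbox (x0 - \<rho> *\<^sub>R One) (x0 + \<rho> *\<^sub>R One)"
  have "cball x0 \<rho> \<subseteq> B"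
  proof
    fix y
    assume "y \<in> cball x0 \<rho>"
    then have "\<bar>(y - x0) \<bullet> i\<bar> \<le> \<rho>" if "i \<in> Basis" for i
      using Basis_le_norm[OF that, of "y - x0"] by (simp add: dist_norm norm_minus_commute)
    then show "y \<in> B"
      by (auto simp: B_def mem_box abs_le_iff algebra_simps)
  qed
  then have "measure lebesgue (cball x0 \<rho>) \<le> measure lebesgue B"
    by (intro measure_mono_fmeasurable) (auto simp: B_def)
  also have "\<dots> = measure lborel B"
    by (simp add: B_def)
  also have "\<dots> = (\<Prod>i\<in>(Basis::'a set). 2 * \<rho>)"
    using assms unfolding B_def
    by (subst measure_lborel_cbox_eq) (auto simp: algebra_simps)
  finally show ?thesis
    by simp
qed

text \<open>The translates of \<open>U\<close> by the multiples \<open>j w e\<close> are pairwise disjoint, since \<open>f\<close> grows by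
  \<open>w\<close> along each step, and about \<open>R / w\<close> of them fit into a ball of radius \<open>2 R + w\<close>.\<close>
lemma measure_mult_le_if_thin:
  fixes U :: "'a::euclidean_space set" and f :: "'a \<Rightarrow> real"
  assumes U: "compact U" "U \<subseteq> cball x0 R" and e: "norm e = 1" and w: "0 < w" and R: "0 \<le> R"
    and shift: "\<And>u t. f (u + t *\<^sub>R e) = f u + t"
    and thin: "\<And>u. u \<in> U \<Longrightarrow> \<alpha> \<le> f u \<and> f u < \<alpha> + w"
  shows "measure lebesgue U * (R / w) \<le> (2 * (2 * R + w)) ^ DIM('a)"
proof -
  define N where "N = nat \<lceil>R / w\<rceil>"
  have "R / w \<le> real N" "real N < R / w + 1"
    using R w by (simp_all add: N_def) linarith+
  then have N: "R / w \<le> real N" "real N * w \<le> R + w"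
    using w by (auto simp: field_simps)
  define T where "T j = (+) ((real j * w) *\<^sub>R e) ` U" for j :: nat
  have compact_T: "compact (T j)" for j
    unfolding T_def using U(1) by (rule compact_translation)
  have "T i \<inter> T j = {}" if "i \<noteq> j" for i j
  proof (rule ccontr)
    assume "T i \<inter> T j \<noteq> {}"
    then obtain u v where uv: "u \<in> U" "v \<in> U" "u + (real i * w) *\<^sub>R e = v + (real j * w) *\<^sub>R e"
      unfolding T_def by (auto simp: add.commute)
    then have "f u + real i * w = f v + real j * w"
      using shift by metis
    then have "\<bar>real i * w - real j * w\<bar> < w"
      using thin[OF uv(1)] thin[OF uv(2)] by linarith
    then have "\<bar>real i - real j\<bar> < 1"
      using w by (simp add: abs_mult left_diff_distrib[symmetric])
    with that show False
      by linarith
  qed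
  then have "measure lebesgue (\<Union>j<N. T j) = (\<Sum>j<N. measure lebesgue (T j))"
    by (intro measure_negligible_finite_Union_image) (auto simp: pairwise_def compact_T lmeasurable_compact)
  also have "\<dots> = real N * measure lebesgue U"
    by (simp add: T_def measure_translation)
  finally have measure_T: "measure lebesgue (\<Union>j<N. T j) = real N * measure lebesgue U" .
  have "u + (real j * w) *\<^sub>R e \<in> cball x0 (2 * R + w)" if "j < N" "u \<in> U" for j u
  proof -
    have "dist x0 (u + (real j * w) *\<^sub>R e) \<le> dist x0 u + norm ((real j * w) *\<^sub>R e)"
      using norm_triangle_ineq4[of "x0 - u" "(real j * w) *\<^sub>R e"] by (simp add: dist_norm algebra_simps)
    also have "\<dots> \<le> R + real N * w"
      using U(2) that e w by (intro add_mono) auto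
    finally show ?thesis
      using N by simp
  qed
  then have "(\<Union>j<N. T j) \<subseteq> cball x0 (2 * R + w)"
    by (auto simp: T_def add.commute)
  then have "measure lebesgue (\<Union>j<N. T j) \<le> measure lebesgue (cball x0 (2 * R + w))"
    by (intro measure_mono_fmeasurable) (auto intro!: fmeasurableD lmeasurable_compact compact_UN compact_T)
  also have "\<dots> \<le> (2 * (2 * R + w)) ^ DIM('a)"
    using R w by (intro measure_cball_le) simp
  finally have "real N * measure lebesgue U \<le> (2 * (2 * R + w)) ^ DIM('a)"
    using measure_T by simp
  moreover have "measure lebesgue U * (R / w) \<le> measure lebesgue U * real N"
    using N by (intro mult_left_mono) auto
  ultimately show ?thesis
    by (simp add: mult.commute)
qed

lemma sum_power_le_geometric:
  fixes q :: real
  assumes "0 \<le> q" "q < 1" "finite N"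
  shows "(\<Sum>n\<in>N. q ^ n) \<le> 1 / (1 - q)"
proof -
  obtain k where k: "N \<subseteq> {..<k}"
    using assms(3) finite_nat_bounded by blast
  have "(\<Sum>n\<in>N. q ^ n) \<le> (\<Sum>n<k. q ^ n)"
    using k assms by (intro sum_mono2) auto
  also have "\<dots> = (1 - q ^ k) / (1 - q)"
    using assms by (simp add: sum_gp_strict)
  also have "\<dots> \<le> 1 / (1 - q)"
    using assms by (intro divide_right_mono) auto
  finally show ?thesis .
qed

lemma sum_dyadic_powr_le:
  fixes M :: "int set" and \<gamma> t :: real
  assumes "finite M" "0 < \<gamma>" "0 < t" and le_t: "\<And>m. m \<in> M \<Longrightarrow> 2 powr (- real_of_int m) \<le> t"
  shows "(\<Sum>m\<in>M. (2 powr (- real_of_int m)) powr \<gamma>) \<le> t powr \<gamma> / (1 - 2 powr (- \<gamma>))"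
proof -
  define m0 where "m0 = \<lceil>- log 2 t\<rceil>"
  define q where "q = (2::real) powr (- \<gamma>)"
  have q: "0 \<le> q" "q < 1"
    using assms(2) by (auto simp: q_def powr_less_one)
  have m0_le: "m0 \<le> m" if "m \<in> M" for m
  proof -
    have "log 2 (2 powr (- real_of_int m)) \<le> log 2 t"
      using le_t[OF that] assms(3) by (subst log_le_cancel_iff) auto
    then show ?thesis
      by (simp add: m0_def ceiling_le_iff)
  qed
  have "(2::real) powr (- real_of_int m0) \<le> 2 powr (log 2 t)"
    unfolding m0_def by (intro powr_mono) linarith+
  then have t0: "(2::real) powr (- real_of_int m0) \<le> t"
    using assms(3) by simp
  have "(2 powr (- real_of_int m)) powr \<gamma> \<le> t powr \<gamma> * q ^ nat (m - m0)" if "m \<in> M" for m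
  proof -
    have "(2 powr (- real_of_int m)) powr \<gamma> = (2 powr (- real_of_int m0)) powr \<gamma> * q ^ nat (m - m0)"
      using m0_le[OF that]
      by (simp add: q_def powr_powr powr_realpow[symmetric] flip: powr_add) (simp add: algebra_simps)
    also have "\<dots> \<le> t powr \<gamma> * q ^ nat (m - m0)"
      using t0 assms(2) q by (intro mult_right_mono powr_mono2) auto
    finally show ?thesis .
  qed
  then have "(\<Sum>m\<in>M. (2 powr (- real_of_int m)) powr \<gamma>) \<le> t powr \<gamma> * (\<Sum>m\<in>M. q ^ nat (m - m0))"
    by (simp add: sum_distrib_left sum_mono)
  moreover have "inj_on (\<lambda>m. nat (m - m0)) M"
  proof (rule inj_onI)
    fix m m'
    assume "m \<in> M" "m' \<in> M" "nat (m - m0) = nat (m' - m0)"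
    then show "m = m'"
      using m0_le[of m] m0_le[of m'] by simp
  qed
  then have "(\<Sum>m\<in>M. q ^ nat (m - m0)) = (\<Sum>n\<in>(\<lambda>m. nat (m - m0)) ` M. q ^ n)"
    by (simp add: sum.reindex)
  also have "\<dots> \<le> 1 / (1 - q)"
    using assms(1) q by (intro sum_power_le_geometric) auto
  finally show ?thesis
    using assms(3) by (simp add: q_def divide_inverse mult_left_mono)
qed

lemma dyadic_scale_bounds:
  fixes l x :: real
  assumes "0 < l" "l \<le> x"
  shows "x \<le> 2 ^ nat \<lceil>log 2 (x / l)\<rceil> * l" "2 ^ nat \<lceil>log 2 (x / l)\<rceil> * l < 2 * x"
proof -
  define k where "k = nat \<lceil>log 2 (x / l)\<rceil>"
  have ratio: "1 \<le> x / l"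
    using assms by simp
  then have k: "real k = real_of_int \<lceil>log 2 (x / l)\<rceil>"
    by (simp add: k_def)
  have "x / l = 2 powr log 2 (x / l)"
    using ratio by simp
  also have "\<dots> \<le> 2 powr real k"
    unfolding k by simp
  finally show "x \<le> 2 ^ k * l"
    using assms by (simp add: powr_realpow divide_le_eq)
  have "2 powr real k < 2 powr (log 2 (x / l) + 1)"
    unfolding k by simp linarith
  also have "\<dots> = 2 * (x / l)"
    using ratio by (simp add: powr_add)
  finally show "2 ^ k * l < 2 * x"
    using assms by (simp add: powr_realpow field_simps)
qed

lemma power_le_if_layer_packing:
  fixes N s R c :: real
  assumes "0 < s" "s \<le> R" "0 < c"
    and packed: "N * s ^ Suc n * (R / (c * s)) \<le> (2 * (2 * R + c * s)) ^ Suc n"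
  shows "N * s ^ n \<le> c * (2 * (2 + c)) ^ Suc n * R ^ n"
proof -
  have "N * s ^ n * R / c = N * s ^ Suc n * (R / (c * s))"
    using assms(1) by simp
  also have "\<dots> \<le> (2 * (2 * R + c * s)) ^ Suc n"
    by (rule packed)
  also have "\<dots> \<le> (2 * (2 + c) * R) ^ Suc n"
  proof (rule power_mono)
    have "c * s \<le> c * R"
      using assms(2,3) by simp
    then show "2 * (2 * R + c * s) \<le> 2 * (2 + c) * R"
      by (simp add: algebra_simps)
  qed (use assms in simp)
  also have "\<dots> = (2 * (2 + c)) ^ Suc n * R ^ n * R"
    by (simp add: power_mult_distrib ac_simps)
  finally have "N * s ^ n * R \<le> (c * (2 * (2 + c)) ^ Suc n * R ^ n) * R"
    using assms(3) by (simp add: pos_divide_le_eq ac_simps)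
  then show ?thesis
    by (rule mult_right_le_imp_le) (use assms(1,2) in linarith)
qed

lemma powr_eq_power_mult_powr: "0 < x \<Longrightarrow> x powr a = x ^ n * x powr (a - real n)"
  by (simp add: powr_realpow[symmetric] flip: powr_add)

lemma sum_powr_sidelen_image_le:
  assumes "finite F" "\<And>S. S \<in> F \<Longrightarrow> dyadic_cube S" "0 < \<gamma>" "0 < t"
    and le_t: "\<And>S. S \<in> F \<Longrightarrow> sidelen S \<le> t"
  shows "(\<Sum>\<sigma>\<in>sidelen ` F. \<sigma> powr \<gamma>) \<le> t powr \<gamma> / (1 - 2 powr (- \<gamma>))"
proof -
  have "sidelen ` F = (\<lambda>m. 2 powr (- real_of_int m)) ` generation ` F"
    using assms(2) by (auto simp: image_image sidelen_eq_generation)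
  moreover have "inj_on (\<lambda>m::int. (2::real) powr (- real_of_int m)) (generation ` F)"
    by (auto simp: inj_on_def powr_inj)
  ultimately have "(\<Sum>\<sigma>\<in>sidelen ` F. \<sigma> powr \<gamma>)
      = (\<Sum>m\<in>generation ` F. (2 powr (- real_of_int m)) powr \<gamma>)"
    by (simp add: sum.reindex)
  also have "\<dots> \<le> t powr \<gamma> / (1 - 2 powr (- \<gamma>))"
    using assms le_t by (intro sum_dyadic_powr_le) (auto simp: sidelen_eq_generation)
  finally show ?thesis .
qed

text \<open>Grouped by side length, the sum is a geometric series over the dyadic sizes, dominated
  by its largest term since \<open>a > n\<close>.\<close>
lemma sum_sidelen_powr_le_of_count:
  fixes F :: "'a::euclidean_space set set" and n :: nat
  assumes F: "finite F" "\<And>S. S \<in> F \<Longrightarrow> dyadic_cube S" and "0 < t" "real n < a" "0 \<le> B"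
    and le_t: "\<And>S. S \<in> F \<Longrightarrow> sidelen S \<le> t"
    and count: "\<And>S. S \<in> F \<Longrightarrow> real (card {S'\<in>F. sidelen S' = sidelen S}) * sidelen S ^ n \<le> B * t ^ n"
  shows "(\<Sum>S\<in>F. sidelen S powr a) \<le> B / (1 - 2 powr (real n - a)) * t powr a"
proof -
  define \<gamma> where "\<gamma> = a - real n"
  have \<gamma>: "0 < \<gamma>" "0 < 1 - 2 powr (- \<gamma>)"
    using assms(4) by (auto simp: \<gamma>_def powr_less_one)
  have pos: "0 < sidelen S" if "S \<in> F" for S
    using F(2)[OF that] by (auto simp: dyadic_cube_def sidelen_dyad_pos)
  have "(\<Sum>S\<in>F. sidelen S powr a)
      = (\<Sum>\<sigma>\<in>sidelen ` F. real (card {S\<in>F. sidelen S = \<sigma>}) * \<sigma> ^ n * \<sigma> powr \<gamma>)"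
  proof -
    have "(\<Sum>S\<in>F. sidelen S powr a) = (\<Sum>\<sigma>\<in>sidelen ` F. \<Sum>S\<in>{S\<in>F. sidelen S = \<sigma>}. sidelen S powr a)"
      using F(1) by (intro sum.group[symmetric]) auto
    also have "\<dots> = (\<Sum>\<sigma>\<in>sidelen ` F. real (card {S\<in>F. sidelen S = \<sigma>}) * \<sigma> ^ n * \<sigma> powr \<gamma>)"
      using pos by (intro sum.cong) (auto simp: \<gamma>_def powr_eq_power_mult_powr[of _ a n] mult.assoc)
    finally show ?thesis .
  qed
  also have "\<dots> \<le> (\<Sum>\<sigma>\<in>sidelen ` F. B * t ^ n * \<sigma> powr \<gamma>)"
    using count by (intro sum_mono mult_right_mono) auto
  also have "\<dots> = B * t ^ n * (\<Sum>\<sigma>\<in>sidelen ` F. \<sigma> powr \<gamma>)"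
    by (simp add: sum_distrib_left)
  also have "\<dots> \<le> B * t ^ n * (t powr \<gamma> / (1 - 2 powr (- \<gamma>)))"
  proof (rule mult_left_mono)
    show "(\<Sum>\<sigma>\<in>sidelen ` F. \<sigma> powr \<gamma>) \<le> t powr \<gamma> / (1 - 2 powr (- \<gamma>))"
      using assms \<gamma> by (intro sum_powr_sidelen_image_le) auto
    show "0 \<le> B * t ^ n"
      using assms(3,5) by simp
  qed
  also have "\<dots> = B / (1 - 2 powr (real n - a)) * t powr a"
    using assms(3) by (simp add: \<gamma>_def powr_eq_power_mult_powr[of t a n])
  finally show ?thesis .
qed

lemma powr_two_power_mult:
  fixes l c :: real
  assumes "0 < l"
  shows "(2 ^ j * l) powr c = (2 powr c) ^ j * l powr c"
  using assms by (simp add: powr_mult powr_realpow[symmetric] powr_powr mult.commute flip: powr_realpow)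

lemma sum_dyadic_scale_powr_le:
  fixes l c :: real
  assumes "finite J" "0 < l" "c < 0"
  shows "(\<Sum>j\<in>J. (2 ^ j * l) powr c) \<le> l powr c / (1 - 2 powr c)"
proof -
  have "(\<Sum>j\<in>J. (2 ^ j * l) powr c) = (\<Sum>j\<in>J. (2 powr c) ^ j) * l powr c"
    using assms(2) by (simp add: powr_two_power_mult sum_distrib_right)
  also have "\<dots> \<le> 1 / (1 - 2 powr c) * l powr c"
    using assms by (intro mult_right_mono sum_power_le_geometric) (auto simp: powr_less_one)
  finally show ?thesis
    by simp
qed

lemma divide_powr_le_if_less_double:
  fixes x D T b :: real
  assumes "0 \<le> x" "0 < D" "0 < T" "T < 2 * D" "0 < b"
  shows "x / D powr b \<le> 2 powr b * (x / T powr b)"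
proof -
  have "T powr b \<le> (2 * D) powr b"
    using assms by (intro powr_mono2) auto
  then have le: "T powr b \<le> 2 powr b * D powr b"
    using assms(2) by (simp add: powr_mult)
  have "x / D powr b = 2 powr b * x / (2 powr b * D powr b)"
    by simp
  also have "\<dots> \<le> 2 powr b * x / T powr b"
    using le assms by (intro divide_left_mono mult_nonneg_nonneg) auto
  finally show ?thesis
    by simp
qed

lemma summable_on_and_infsum_le_if_finite_sums_le:
  fixes f :: "'a \<Rightarrow> real"
  assumes nonneg: "\<And>x. x \<in> A \<Longrightarrow> 0 \<le> f x"
    and bounded: "\<And>F. finite F \<Longrightarrow> F \<subseteq> A \<Longrightarrow> sum f F \<le> B"
  shows "f summable_on A \<and> infsum f A \<le> B"
proof
  show summable: "f summable_on A"
    using nonneg bounded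
    by (intro nonneg_bounded_partial_sums_imp_summable_on eventually_finite_subsets_at_top_weakI) auto
  show "infsum f A \<le> B"
    using summable bounded by (rule infsum_le_finite_sums)
qed

section \<open>Whitney coverings of Lipschitz domains\<close>

locale whitney_domain =
  fixes \<Omega> :: "'a::euclidean_space set" and W :: "'a set set" and CW :: real
  assumes open_domain: "open \<Omega>" and bounded_domain: "bounded \<Omega>"
    and frontier_nonempty: "frontier \<Omega> \<noteq> {}"
    and charts: "\<forall>p\<in>frontier \<Omega>. \<exists>e r h M \<phi>. lipschitz_chart \<Omega> p e r h M \<phi>"
    and cubes: "\<forall>Q\<in>W. dyadic_cube Q"
    and interiors_disjoint: "\<forall>Q\<in>W. \<forall>S\<in>W. Q \<noteq> S \<longrightarrow> interior Q \<inter> interior S = {}"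
    and Union_cubes: "\<Union>W = \<Omega>"
    and CW_pos: "0 < CW"
    and whitney_dist: "\<forall>Q\<in>W. CW * sidelen Q \<le> setdist Q (frontier \<Omega>) \<and>
                              setdist Q (frontier \<Omega>) \<le> 4 * CW * sidelen Q"
begin

lemma cube_eq_dyad:
  assumes "S \<in> W"
  obtains m k where "S = dyad m k"
  using assms cubes by (auto simp: dyadic_cube_def)

lemma sidelen_pos: "S \<in> W \<Longrightarrow> 0 < sidelen S"
  by (erule cube_eq_dyad) (simp add: sidelen_dyad_pos)

lemma compact_cube: "S \<in> W \<Longrightarrow> compact S"
  by (erule cube_eq_dyad) (simp add: compact_dyad)

lemma cube_nonempty: "S \<in> W \<Longrightarrow> S \<noteq> {}"
  by (erule cube_eq_dyad) (simp add: dyad_nonempty)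

lemma cube_subset_domain: "S \<in> W \<Longrightarrow> S \<subseteq> \<Omega>"
  using Union_cubes by blast

lemma dist_le_sidelen: "S \<in> W \<Longrightarrow> x \<in> S \<Longrightarrow> y \<in> S \<Longrightarrow> dist x y \<le> real DIM('a) * sidelen S"
  by (erule cube_eq_dyad) (simp add: dist_le_sidelen_dyad)

lemma measure_cube: "S \<in> W \<Longrightarrow> measure lebesgue S = sidelen S ^ DIM('a)"
  by (erule cube_eq_dyad) (simp add: measure_dyad)

lemma measure_Union_cubes:
  assumes "finite F" "F \<subseteq> W"
  shows "measure lebesgue (\<Union>F) = (\<Sum>S\<in>F. sidelen S ^ DIM('a))"
proof -
  have "negligible (S \<inter> S')" if S: "S \<in> W" and S': "S' \<in> W" and "S \<noteq> S'" for S S'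
  proof -
    obtain m k where "S = dyad m k"
      by (rule cube_eq_dyad[OF S])
    moreover obtain m' k' where "S' = dyad m' k'"
      by (rule cube_eq_dyad[OF S'])
    ultimately show ?thesis
      using interiors_disjoint S S' \<open>S \<noteq> S'\<close> by (simp add: negligible_Int_dyad)
  qed
  then have "measure lebesgue (\<Union>S\<in>F. S) = (\<Sum>S\<in>F. measure lebesgue S)"
    using assms compact_cube
    by (intro measure_negligible_finite_Union_image) (auto simp: pairwise_def lmeasurable_compact)
  then show ?thesis
    using assms by (simp add: subset_iff measure_cube)
qed

lemma setdist_frontier_bounds:
  assumes S: "S \<in> W" and x: "x \<in> S"
  shows "CW * sidelen S \<le> setdist {x} (frontier \<Omega>)"
    and "setdist {x} (frontier \<Omega>) \<le> (4 * CW + real DIM('a)) * sidelen S"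
proof -
  have "setdist S (frontier \<Omega>) \<le> setdist {x} (frontier \<Omega>)"
    using x by (intro setdist_subset_left) auto
  then show "CW * sidelen S \<le> setdist {x} (frontier \<Omega>)"
    using whitney_dist S by fastforce
  obtain y z where yz: "y \<in> S" "z \<in> frontier \<Omega>" "dist y z = setdist S (frontier \<Omega>)"
    using setdist_compact_closed[OF compact_cube[OF S] frontier_closed cube_nonempty[OF S] frontier_nonempty]
    by blast
  have "setdist {x} (frontier \<Omega>) \<le> dist x y + dist y z"
    using yz by (metis dist_triangle order_trans setdist_le_dist singletonI)
  also have "\<dots> \<le> real DIM('a) * sidelen S + 4 * CW * sidelen S"
    using dist_le_sidelen[OF S x yz(1)] yz(3) whitney_dist S by fastforce
  finally show "setdist {x} (frontier \<Omega>) \<le> (4 * CW + real DIM('a)) * sidelen S"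
    by (simp add: algebra_simps)
qed

lemma cube_near_frontier:
  assumes S: "S \<in> W"
  obtains z where "z \<in> frontier \<Omega>"
    "\<And>x. x \<in> S \<Longrightarrow> dist x z \<le> (4 * CW + 2 * real DIM('a)) * sidelen S"
proof -
  obtain y where y: "y \<in> S"
    using cube_nonempty[OF S] by blast
  obtain z where z: "z \<in> frontier \<Omega>" "dist y z = setdist {y} (frontier \<Omega>)"
    using setdist_compact_closed[of "{y}" "frontier \<Omega>"] frontier_nonempty by auto
  have "dist x z \<le> (4 * CW + 2 * real DIM('a)) * sidelen S" if "x \<in> S" for x
    using dist_triangle[of x z y] dist_le_sidelen[OF S that y] setdist_frontier_bounds(2)[OF S y] z(2)
    by (simp add: algebra_simps)
  with z(1) show ?thesis
    using that by blast
qed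

context
  fixes p e r h M \<phi>
  assumes chart: "lipschitz_chart \<Omega> p e r h M \<phi>"
begin

interpretation lipschitz_chart \<Omega> p e r h M \<phi>
  by (fact chart)

lemma graph_height_on_cube:
  assumes S: "S \<in> W" "S \<subseteq> cylinder e p (r / 2) (h / 2)"
    and small: "(4 * CW + real DIM('a)) * sidelen S < min r h / 2" and u: "u \<in> S"
  shows "CW * sidelen S \<le> graph_height e \<phi> u"
    and "graph_height e \<phi> u \<le> (1 + M) * (4 * CW + real DIM('a)) * sidelen S"
proof -
  note \<delta> = setdist_frontier_bounds[OF S(1) u]
  have u_cyl: "u \<in> cylinder e p (r / 2) (h / 2)"
    using S(2) u by blast
  moreover have "u \<in> \<Omega>"
    using cube_subset_domain[OF S(1)] u by blast
  ultimately show "CW * sidelen S \<le> graph_height e \<phi> u"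
    using \<delta>(1) setdist_frontier_le_graph_height by fastforce
  have "graph_height e \<phi> u \<le> (1 + M) * setdist {u} (frontier \<Omega>)"
    using \<delta>(2) small u_cyl by (intro graph_height_le_setdist_frontier open_domain frontier_nonempty) auto
  also have "\<dots> \<le> (1 + M) * ((4 * CW + real DIM('a)) * sidelen S)"
    using \<delta>(2) lipschitz_nonneg by (intro mult_left_mono) auto
  finally show "graph_height e \<phi> u \<le> (1 + M) * (4 * CW + real DIM('a)) * sidelen S"
    by (simp add: mult.assoc)
qed

text \<open>Cubes of side \<open>s\<close> inside a chart lie in a layer of height \<open>\<approx> s\<close> above the graph, to
  which \<open>measure_mult_le_if_thin\<close> applies.\<close>
lemma card_cubes_in_chart_le:
  assumes "0 < s" "s \<le> R" and small: "(4 * CW + real DIM('a)) * s < min r h / 2"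
    and F: "finite F" "F \<subseteq> W"
    and FS: "\<And>S. S \<in> F \<Longrightarrow> sidelen S = s \<and> S \<subseteq> cball x0 R \<and> S \<subseteq> cylinder e p (r / 2) (h / 2)"
  shows "real (card F) * s ^ (DIM('a) - 1)
    \<le> (1 + M) * (4 * CW + real DIM('a)) * (2 * (2 + (1 + M) * (4 * CW + real DIM('a)))) ^ DIM('a)
       * R ^ (DIM('a) - 1)"
proof -
  define c where "c = (1 + M) * (4 * CW + real DIM('a))"
  obtain n where n: "DIM('a) = Suc n"
    using DIM_positive[where 'a='a] not0_implies_Suc by blast
  have c: "0 < c"
    using lipschitz_nonneg CW_pos by (simp add: c_def add_pos_nonneg)
  have "CW * s \<le> graph_height e \<phi> u \<and> graph_height e \<phi> u < CW * s + c * s" if u: "u \<in> \<Union>F" for u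
  proof -
    obtain S where S: "S \<in> F" "u \<in> S"
      using u by blast
    then have "S \<in> W" "sidelen S = s" "S \<subseteq> cylinder e p (r / 2) (h / 2)"
      using F FS by auto
    moreover have "0 < CW * s"
      using CW_pos assms(1) by simp
    ultimately show ?thesis
      using graph_height_on_cube[of S u] S(2) small by (auto simp: c_def)
  qed
  moreover have "compact (\<Union>F)" "\<Union>F \<subseteq> cball x0 R"
    using F FS compact_cube by blast+
  ultimately have "measure lebesgue (\<Union>F) * (R / (c * s)) \<le> (2 * (2 * R + c * s)) ^ DIM('a)"
    using assms(1,2) c
    by (intro measure_mult_le_if_thin[OF _ _ unit _ _ graph_height_add_scaleR[OF unit, of \<phi>],
        where \<alpha> = "CW * s"]) auto
  moreover have "measure lebesgue (\<Union>F) = real (card F) * s ^ DIM('a)"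
    using measure_Union_cubes[OF F] FS by simp
  ultimately have "real (card F) * s ^ n \<le> c * (2 * (2 + c)) ^ Suc n * R ^ n"
    using assms(1,2) c unfolding n by (intro power_le_if_layer_packing) auto
  then show ?thesis
    by (simp only: n diff_Suc_1 c_def)
qed

end

lemma finite_chart_cover:
  obtains P e r h M \<phi> where "finite P" "P \<subseteq> frontier \<Omega>" "P \<noteq> {}"
    "\<And>p. p \<in> P \<Longrightarrow> lipschitz_chart \<Omega> p (e p) (r p) (h p) (M p) (\<phi> p)"
    "frontier \<Omega> \<subseteq> (\<Union>p\<in>P. cylinder (e p) p (r p / 4) (h p / 4))"
proof -
  obtain e r h M \<phi> where chart: "\<And>p. p \<in> frontier \<Omega> \<Longrightarrow> lipschitz_chart \<Omega> p (e p) (r p) (h p) (M p) (\<phi> p)"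
    using charts unfolding Ball_def choice_iff' by blast
  then have "frontier \<Omega> \<subseteq> (\<Union>p\<in>frontier \<Omega>. cylinder (e p) p (r p / 4) (h p / 4))"
    by (auto intro!: center_in_cylinder simp: lipschitz_chart_def)
  moreover have "compact (frontier \<Omega>)"
    using bounded_domain by (rule compact_frontier_bounded)
  ultimately obtain P where P: "P \<subseteq> frontier \<Omega>" "finite P"
    "frontier \<Omega> \<subseteq> (\<Union>p\<in>P. cylinder (e p) p (r p / 4) (h p / 4))"
    by (elim compactE_image[OF _ open_cylinder])
  moreover have "P \<noteq> {}"
    using P(3) frontier_nonempty by blast
  ultimately show ?thesis
    by (intro that[of P e r h M \<phi>]) (auto intro: chart)
qed

text \<open>Each cube of side \<open>s\<close> is within distance \<open>\<approx> s\<close> of the frontier, hence lies in the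
  half-cylinder of one of the charts once \<open>s\<close> is small.\<close>
lemma card_cubes_le_if_chart_cover:
  assumes P: "finite P"
    and chart: "\<And>p. p \<in> P \<Longrightarrow> lipschitz_chart \<Omega> p (e p) (r p) (h p) (M p) (\<phi> p)"
    and cover: "frontier \<Omega> \<subseteq> (\<Union>p\<in>P. cylinder (e p) p (r p / 4) (h p / 4))"
    and small: "\<And>p. p \<in> P \<Longrightarrow> (4 * CW + 2 * real DIM('a)) * s \<le> min (r p) (h p) / 4"
    and s: "0 < s" "s \<le> R" and F: "finite F" "F \<subseteq> W"
    and FS: "\<And>S. S \<in> F \<Longrightarrow> sidelen S = s \<and> S \<subseteq> cball x0 R"
  shows "real (card F) * s ^ (DIM('a) - 1) \<le> (\<Sum>p\<in>P. (1 + M p) * (4 * CW + real DIM('a))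
      * (2 * (2 + (1 + M p) * (4 * CW + real DIM('a)))) ^ DIM('a)) * R ^ (DIM('a) - 1)"
proof -
  define G where "G p = {S\<in>F. S \<subseteq> cylinder (e p) p (r p / 2) (h p / 2)}" for p
  have "F \<subseteq> (\<Union>p\<in>P. G p)"
  proof
    fix S
    assume S: "S \<in> F"
    then obtain z where z: "z \<in> frontier \<Omega>"
      "\<And>x. x \<in> S \<Longrightarrow> dist x z \<le> (4 * CW + 2 * real DIM('a)) * sidelen S"
      using cube_near_frontier F by blast
    then obtain p where p: "p \<in> P" "z \<in> cylinder (e p) p (r p / 4) (h p / 4)"
      using cover by blast
    have "S \<subseteq> cylinder (e p) p (r p / 2) (h p / 2)"
      using lipschitz_chart.unit[OF chart[OF p(1)]] p(2) z(2) FS[OF S] small[OF p(1)]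
      by (intro subset_half_cylinder_if_near) auto
    then show "S \<in> (\<Union>p\<in>P. G p)"
      using p(1) S by (auto simp: G_def)
  qed
  then have "card F \<le> card (\<Union>p\<in>P. G p)"
    using F P by (intro card_mono) (auto simp: G_def)
  also have "\<dots> \<le> (\<Sum>p\<in>P. card (G p))"
    by (rule card_UN_le[OF P])
  finally have "real (card F) * s ^ (DIM('a) - 1) \<le> (\<Sum>p\<in>P. real (card (G p))) * s ^ (DIM('a) - 1)"
    using s by (intro mult_right_mono) (simp_all flip: of_nat_sum)
  also have "\<dots> = (\<Sum>p\<in>P. real (card (G p)) * s ^ (DIM('a) - 1))"
    by (simp add: sum_distrib_right)
  also have "\<dots> \<le> (\<Sum>p\<in>P. (1 + M p) * (4 * CW + real DIM('a))
      * (2 * (2 + (1 + M p) * (4 * CW + real DIM('a)))) ^ DIM('a) * R ^ (DIM('a) - 1))"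
  proof (rule sum_mono)
    fix p
    assume p: "p \<in> P"
    have "0 < min (r p) (h p)"
      using chart[OF p] by (simp add: lipschitz_chart_def)
    moreover have "(4 * CW + real DIM('a)) * s \<le> (4 * CW + 2 * real DIM('a)) * s"
      using s(1) by (intro mult_right_mono) auto
    ultimately have "(4 * CW + real DIM('a)) * s < min (r p) (h p) / 2"
      using small[OF p] by linarith
    then show "real (card (G p)) * s ^ (DIM('a) - 1) \<le> (1 + M p) * (4 * CW + real DIM('a))
        * (2 * (2 + (1 + M p) * (4 * CW + real DIM('a)))) ^ DIM('a) * R ^ (DIM('a) - 1)"
      using F FS s by (intro card_cubes_in_chart_le[OF chart[OF p]]) (auto simp: G_def)
  qed
  finally show ?thesis
    by (simp add: sum_distrib_right)
qed

lemma card_small_cubes_le: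
  obtains s0 K where "0 < s0" "0 \<le> K"
    "\<And>s R x0 F. 0 < s \<Longrightarrow> s \<le> s0 \<Longrightarrow> s \<le> R \<Longrightarrow> finite F \<Longrightarrow> F \<subseteq> W \<Longrightarrow>
       (\<And>S. S \<in> F \<Longrightarrow> sidelen S = s \<and> S \<subseteq> cball x0 R) \<Longrightarrow>
       real (card F) * s ^ (DIM('a) - 1) \<le> K * R ^ (DIM('a) - 1)"
proof -
  obtain P e r h M \<phi> where P: "finite P" "P \<subseteq> frontier \<Omega>" "P \<noteq> {}"
    and chart: "\<And>p. p \<in> P \<Longrightarrow> lipschitz_chart \<Omega> p (e p) (r p) (h p) (M p) (\<phi> p)"
    and cover: "frontier \<Omega> \<subseteq> (\<Union>p\<in>P. cylinder (e p) p (r p / 4) (h p / 4))"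
    using finite_chart_cover by blast
  define C where "C = 4 * CW + 2 * real DIM('a)"
  have C: "0 < C"
    using CW_pos by (simp add: C_def)
  define s0 where "s0 = Min ((\<lambda>p. min (r p) (h p) / (4 * C)) ` P)"
  have "0 < s0"
    using P chart C by (simp add: s0_def lipschitz_chart_def)
  moreover have "0 \<le> (\<Sum>p\<in>P. (1 + M p) * (4 * CW + real DIM('a))
      * (2 * (2 + (1 + M p) * (4 * CW + real DIM('a)))) ^ DIM('a))"
    using chart CW_pos lipschitz_chart.lipschitz_nonneg
    by (force intro!: sum_nonneg mult_nonneg_nonneg zero_le_power add_nonneg_nonneg)
  moreover have "real (card F) * s ^ (DIM('a) - 1) \<le> (\<Sum>p\<in>P. (1 + M p) * (4 * CW + real DIM('a))
      * (2 * (2 + (1 + M p) * (4 * CW + real DIM('a)))) ^ DIM('a)) * R ^ (DIM('a) - 1)"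
    if "0 < s" "s \<le> s0" "s \<le> R" "finite F" "F \<subseteq> W"
      "\<And>S. S \<in> F \<Longrightarrow> sidelen S = s \<and> S \<subseteq> cball x0 R" for s R x0 F
  proof (rule card_cubes_le_if_chart_cover[OF P(1) _ cover])
    fix p
    assume p: "p \<in> P"
    then show "lipschitz_chart \<Omega> p (e p) (r p) (h p) (M p) (\<phi> p)"
      by (rule chart)
    have "s \<le> min (r p) (h p) / (4 * C)"
      using that(2) p P unfolding s0_def by (meson Min_le finite_imageI imageI order.trans)
    then show "(4 * CW + 2 * real DIM('a)) * s \<le> min (r p) (h p) / 4"
      using C by (simp add: C_def field_simps)
  qed (use that in auto)
  ultimately show ?thesis
    by (rule that)
qed

lemma sum_large_cubes_powr_le:
  assumes "0 < s0" "0 \<le> a"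
  obtains K0 where "0 \<le> K0"
    "\<And>t F. finite F \<Longrightarrow> F \<subseteq> W \<Longrightarrow> (\<And>S. S \<in> F \<Longrightarrow> s0 < sidelen S \<and> sidelen S \<le> t) \<Longrightarrow>
       (\<Sum>S\<in>F. sidelen S powr a) \<le> K0 * t powr a"
proof -
  obtain B c where B: "\<Omega> \<subseteq> cball c B" "0 \<le> B"
    using bounded_domain unfolding bounded_subset_cball by blast
  define K0 where "K0 = (2 * B) ^ DIM('a) / s0 ^ DIM('a)"
  have "0 \<le> K0"
    using B(2) assms by (simp add: K0_def)
  moreover have "(\<Sum>S\<in>F. sidelen S powr a) \<le> K0 * t powr a"
    if F: "finite F" "F \<subseteq> W" and FS: "\<And>S. S \<in> F \<Longrightarrow> s0 < sidelen S \<and> sidelen S \<le> t" for t F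
  proof -
    have "real (card F) * s0 ^ DIM('a) \<le> (\<Sum>S\<in>F. sidelen S ^ DIM('a))"
      using FS assms by (simp add: sum_bounded_below power_mono less_imp_le)
    also have "\<dots> = measure lebesgue (\<Union>F)"
      using measure_Union_cubes[OF F] by simp
    also have "\<dots> \<le> measure lebesgue (cball c B)"
      using F B(1) cube_subset_domain compact_cube
      by (intro measure_mono_fmeasurable) (auto intro!: fmeasurableD lmeasurable_compact compact_Union)
    also have "\<dots> \<le> (2 * B) ^ DIM('a)"
      by (rule measure_cball_le[OF B(2)])
    finally have card: "real (card F) \<le> K0"
      using assms by (simp add: K0_def field_simps)
    have "(\<Sum>S\<in>F. sidelen S powr a) \<le> real (card F) * t powr a"
    proof (rule sum_bounded_above)
      fix S
      assume "S \<in> F"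
      then show "sidelen S powr a \<le> t powr a"
        using FS[of S] assms by (intro powr_mono2) auto
    qed
    also have "\<dots> \<le> K0 * t powr a"
      using card by (intro mult_right_mono) auto
    finally show ?thesis .
  qed
  ultimately show ?thesis
    by (rule that)
qed

lemma sum_small_cubes_powr_le:
  assumes a: "real DIM('a) - 1 < a" and A: "1 \<le> A"
  obtains s0 C where "0 < s0" "0 \<le> C"
    "\<And>t x0 F. 0 < t \<Longrightarrow> finite F \<Longrightarrow> F \<subseteq> W \<Longrightarrow>
       (\<And>S. S \<in> F \<Longrightarrow> sidelen S \<le> s0 \<and> sidelen S \<le> t \<and> S \<subseteq> cball x0 (A * t)) \<Longrightarrow>
       (\<Sum>S\<in>F. sidelen S powr a) \<le> C * t powr a"
proof -
  obtain s0 K where s0: "0 < s0" and K: "0 \<le> K"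
    and count: "\<And>s R x0 F. 0 < s \<Longrightarrow> s \<le> s0 \<Longrightarrow> s \<le> R \<Longrightarrow> finite F \<Longrightarrow> F \<subseteq> W \<Longrightarrow>
       (\<And>S. S \<in> F \<Longrightarrow> sidelen S = s \<and> S \<subseteq> cball x0 R) \<Longrightarrow>
       real (card F) * s ^ (DIM('a) - 1) \<le> K * R ^ (DIM('a) - 1)"
    using card_small_cubes_le by blast
  define n where "n = DIM('a) - 1"
  have n: "real n < a"
    using a DIM_positive[where 'a='a] by (simp add: n_def)
  have "2 powr (real n - a) < 1"
    using n by (simp add: powr_less_one)
  then have "0 \<le> K * A ^ n / (1 - 2 powr (real n - a))"
    using K A by simp
  moreover have "(\<Sum>S\<in>F. sidelen S powr a) \<le> K * A ^ n / (1 - 2 powr (real n - a)) * t powr a"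
    if t: "0 < t" and F: "finite F" "F \<subseteq> W"
      and FS: "\<And>S. S \<in> F \<Longrightarrow> sidelen S \<le> s0 \<and> sidelen S \<le> t \<and> S \<subseteq> cball x0 (A * t)" for t x0 F
  proof (rule sum_sidelen_powr_le_of_count)
    show "\<And>S. S \<in> F \<Longrightarrow> dyadic_cube S"
      using F cubes by blast
    show "\<And>S. S \<in> F \<Longrightarrow> sidelen S \<le> t"
      using FS by blast
    show "0 \<le> K * A ^ n"
      using K A by simp
    fix S
    assume S: "S \<in> F"
    have "real (card {S'\<in>F. sidelen S' = sidelen S}) * sidelen S ^ n \<le> K * (A * t) ^ n"
      unfolding n_def
    proof (rule count)
      show "0 < sidelen S"
        using S F sidelen_pos by blast
      show "sidelen S \<le> A * t"
        using FS[OF S] mult_right_mono[OF A, of t] t by linarith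
      show "\<And>S'. S' \<in> {S'\<in>F. sidelen S' = sidelen S} \<Longrightarrow> sidelen S' = sidelen S \<and> S' \<subseteq> cball x0 (A * t)"
        using FS by auto
    qed (use S F FS in auto)
    then show "real (card {S'\<in>F. sidelen S' = sidelen S}) * sidelen S ^ n \<le> K * A ^ n * t ^ n"
      by (simp add: power_mult_distrib mult.assoc)
  qed (fact F(1) t n)+
  ultimately show ?thesis
    by (rule that[OF s0])
qed

lemma sum_sidelen_powr_le:
  assumes a: "real DIM('a) - 1 < a" and A: "1 \<le> A"
  obtains CG where "0 \<le> CG"
    "\<And>t x0 F. 0 < t \<Longrightarrow> finite F \<Longrightarrow> F \<subseteq> W \<Longrightarrow>
       (\<And>S. S \<in> F \<Longrightarrow> sidelen S \<le> t \<and> S \<subseteq> cball x0 (A * t)) \<Longrightarrow>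
       (\<Sum>S\<in>F. sidelen S powr a) \<le> CG * t powr a"
proof -
  obtain s0 C where s0: "0 < s0" and C: "0 \<le> C"
    and small: "\<And>t x0 F. 0 < t \<Longrightarrow> finite F \<Longrightarrow> F \<subseteq> W \<Longrightarrow>
       (\<And>S. S \<in> F \<Longrightarrow> sidelen S \<le> s0 \<and> sidelen S \<le> t \<and> S \<subseteq> cball x0 (A * t)) \<Longrightarrow>
       (\<Sum>S\<in>F. sidelen S powr a) \<le> C * t powr a"
    using sum_small_cubes_powr_le[OF a A] by blast
  have "0 \<le> a"
    using a DIM_positive[where 'a='a] by linarith
  then obtain K0 where K0: "0 \<le> K0"
    and large: "\<And>t F. finite F \<Longrightarrow> F \<subseteq> W \<Longrightarrow> (\<And>S. S \<in> F \<Longrightarrow> s0 < sidelen S \<and> sidelen S \<le> t) \<Longrightarrow>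
       (\<Sum>S\<in>F. sidelen S powr a) \<le> K0 * t powr a"
    using sum_large_cubes_powr_le[OF s0] by blast
  have "0 \<le> C + K0"
    using C K0 by simp
  moreover have "(\<Sum>S\<in>F. sidelen S powr a) \<le> (C + K0) * t powr a"
    if t: "0 < t" and F: "finite F" "F \<subseteq> W"
      and FS: "\<And>S. S \<in> F \<Longrightarrow> sidelen S \<le> t \<and> S \<subseteq> cball x0 (A * t)" for t x0 F
  proof -
    define L where "L = {S\<in>F. s0 < sidelen S}"
    have "(\<Sum>S\<in>F. sidelen S powr a) = (\<Sum>S\<in>F - L. sidelen S powr a) + (\<Sum>S\<in>L. sidelen S powr a)"
      using F by (intro sum.subset_diff) (auto simp: L_def)
    also have "\<dots> \<le> C * t powr a + K0 * t powr a"
    proof (rule add_mono)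
      show "(\<Sum>S\<in>F - L. sidelen S powr a) \<le> C * t powr a"
        using F FS by (intro small[OF t]) (auto simp: L_def)
      show "(\<Sum>S\<in>L. sidelen S powr a) \<le> K0 * t powr a"
        using F FS by (intro large) (auto simp: L_def)
    qed
    finally show ?thesis
      by (simp add: distrib_right)
  qed
  ultimately show ?thesis
    by (rule that)
qed

lemma long_dist_bounds:
  assumes "Q \<in> W" "S \<in> W"
  shows "sidelen Q \<le> long_dist Q S" "sidelen S \<le> long_dist Q S"
  using setdist_pos_le[of Q S] sidelen_pos[OF assms(1)] sidelen_pos[OF assms(2)]
  by (auto simp: long_dist_def)

lemma long_dist_pos:
  assumes "Q \<in> W" "S \<in> W"
  shows "0 < long_dist Q S"
  using sidelen_pos[OF assms(2)] long_dist_bounds(2)[OF assms] by linarith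

lemma cube_subset_cball_long_dist:
  assumes Q: "Q \<in> W" and S: "S \<in> W" and x0: "x0 \<in> Q"
  shows "S \<subseteq> cball x0 (real DIM('a) * long_dist Q S)"
proof
  fix y
  assume y: "y \<in> S"
  obtain u v where uv: "u \<in> Q" "v \<in> S" "dist u v = setdist Q S"
    using setdist_compact_closed[OF compact_cube[OF Q] compact_imp_closed[OF compact_cube[OF S]]
        cube_nonempty[OF Q] cube_nonempty[OF S]] by blast
  have "dist x0 y \<le> dist x0 u + dist u v + dist v y"
    by (meson add_right_mono dist_triangle order_trans)
  also have "\<dots> \<le> real DIM('a) * sidelen Q + real DIM('a) * setdist Q S + real DIM('a) * sidelen S"
    using dist_le_sidelen[OF Q x0 uv(1)] dist_le_sidelen[OF S uv(2) y] uv(3)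
      mult_right_mono[of 1 "real DIM('a)" "setdist Q S"] setdist_pos_le[of Q S]
    by simp
  finally show "y \<in> cball x0 (real DIM('a) * long_dist Q S)"
    by (simp add: long_dist_def algebra_simps)
qed

text \<open>Group the cubes \<open>S\<close> by the dyadic scale \<open>2\<^sup>j \<ell>(Q) \<approx> D(Q, S)\<close>: each group lies in a ball
  of radius \<open>\<approx> 2\<^sup>j \<ell>(Q)\<close> around \<open>Q\<close>, so \<open>packing\<close> bounds its contribution by \<open>(2\<^sup>j \<ell>(Q))\<^sup>a\<^sup>-\<^sup>b\<close>,
  and these form a geometric series since \<open>a < b\<close>.\<close>
lemma sum_long_dist_kernel_le_if_packing:
  assumes packing: "\<And>t x0 F. 0 < t \<Longrightarrow> finite F \<Longrightarrow> F \<subseteq> W \<Longrightarrow>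
       (\<And>S. S \<in> F \<Longrightarrow> sidelen S \<le> t \<and> S \<subseteq> cball x0 (real DIM('a) * t)) \<Longrightarrow>
       (\<Sum>S\<in>F. sidelen S powr a) \<le> CG * t powr a"
    and "0 \<le> CG" "0 < b" "a < b" and Q: "Q \<in> W" and F: "finite F" "F \<subseteq> W"
  shows "(\<Sum>S\<in>F. sidelen S powr a / long_dist Q S powr b)
    \<le> 2 powr b * CG / (1 - 2 powr (a - b)) * sidelen Q powr (a - b)"
proof -
  define l where "l = sidelen Q"
  have l: "0 < l"
    using sidelen_pos[OF Q] by (simp add: l_def)
  obtain x0 where x0: "x0 \<in> Q"
    using cube_nonempty[OF Q] by blast
  define k where "k S = nat \<lceil>log 2 (long_dist Q S / l)\<rceil>" for S
  have scale: "long_dist Q S \<le> 2 ^ k S * l" "2 ^ k S * l < 2 * long_dist Q S" if "S \<in> W" for S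
    using dyadic_scale_bounds[OF l long_dist_bounds(1)[OF Q that, folded l_def]] by (simp_all add: k_def)
  have annulus: "(\<Sum>S\<in>{S\<in>F. k S = j}. sidelen S powr a) \<le> CG * (2 ^ j * l) powr a" for j
  proof (rule packing)
    fix S
    assume "S \<in> {S\<in>F. k S = j}"
    then have S: "S \<in> W" "k S = j"
      using F by auto
    have "cball x0 (real DIM('a) * long_dist Q S) \<subseteq> cball x0 (real DIM('a) * (2 ^ j * l))"
      using scale(1)[OF S(1)] S(2) by (intro subset_cball mult_left_mono) auto
    then show "sidelen S \<le> 2 ^ j * l \<and> S \<subseteq> cball x0 (real DIM('a) * (2 ^ j * l))"
      using long_dist_bounds(2)[OF Q S(1)] scale(1)[OF S(1)] S(2) cube_subset_cball_long_dist[OF Q S(1) x0]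
      by auto
  qed (use F l in auto)
  have "(\<Sum>S\<in>F. sidelen S powr a / long_dist Q S powr b)
      \<le> (\<Sum>S\<in>F. 2 powr b * (sidelen S powr a / (2 ^ k S * l) powr b))"
  proof (rule sum_mono)
    fix S
    assume "S \<in> F"
    then have S: "S \<in> W"
      using F by blast
    show "sidelen S powr a / long_dist Q S powr b \<le> 2 powr b * (sidelen S powr a / (2 ^ k S * l) powr b)"
      using scale[OF S] l long_dist_pos[OF Q S] \<open>0 < b\<close> by (intro divide_powr_le_if_less_double) auto
  qed
  also have "\<dots> = (\<Sum>j\<in>k ` F. \<Sum>S\<in>{S\<in>F. k S = j}. 2 powr b * (sidelen S powr a / (2 ^ k S * l) powr b))"
    using F by (intro sum.group[symmetric]) auto
  also have "\<dots> = (\<Sum>j\<in>k ` F. 2 powr b / (2 ^ j * l) powr b * (\<Sum>S\<in>{S\<in>F. k S = j}. sidelen S powr a))"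
    by (intro sum.cong refl) (auto simp: sum_distrib_left)
  also have "\<dots> \<le> (\<Sum>j\<in>k ` F. 2 powr b / (2 ^ j * l) powr b * (CG * (2 ^ j * l) powr a))"
    using annulus by (intro sum_mono mult_left_mono) auto
  also have "\<dots> = (\<Sum>j\<in>k ` F. 2 powr b * CG * ((2 ^ j * l) powr a / (2 ^ j * l) powr b))"
    by (simp add: ac_simps)
  also have "\<dots> = 2 powr b * CG * (\<Sum>j\<in>k ` F. (2 ^ j * l) powr (a - b))"
    by (simp add: sum_distrib_left powr_diff)
  also have "\<dots> \<le> 2 powr b * CG * (l powr (a - b) / (1 - 2 powr (a - b)))"
    using assms(2-4) F l by (intro mult_left_mono sum_dyadic_scale_powr_le) auto
  finally show ?thesis
    by (simp add: l_def)
qed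

lemma sum_long_dist_kernel_le:
  assumes a: "real DIM('a) - 1 < a" and ab: "a < b"
  obtains C where "0 < C"
    "\<And>Q F. Q \<in> W \<Longrightarrow> finite F \<Longrightarrow> F \<subseteq> W \<Longrightarrow>
       (\<Sum>S\<in>F. sidelen S powr a / long_dist Q S powr b) \<le> C * sidelen Q powr (a - b)"
proof -
  have "1 \<le> real DIM('a)"
    using DIM_positive[where 'a='a] by linarith
  then obtain CG where CG: "0 \<le> CG"
    and packing: "\<And>t x0 F. 0 < t \<Longrightarrow> finite F \<Longrightarrow> F \<subseteq> W \<Longrightarrow>
       (\<And>S. S \<in> F \<Longrightarrow> sidelen S \<le> t \<and> S \<subseteq> cball x0 (real DIM('a) * t)) \<Longrightarrow>
       (\<Sum>S\<in>F. sidelen S powr a) \<le> CG * t powr a"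
    using sum_sidelen_powr_le[OF a] by blast
  have "0 < b"
    using a ab DIM_positive[where 'a='a] by linarith
  define C where "C = 2 powr b * CG / (1 - 2 powr (a - b))"
  have "2 powr (a - b) < 1"
    using ab by (simp add: powr_less_one)
  then have "0 \<le> C"
    using CG by (simp add: C_def)
  then have "0 < C + 1"
    by simp
  moreover have "(\<Sum>S\<in>F. sidelen S powr a / long_dist Q S powr b) \<le> (C + 1) * sidelen Q powr (a - b)"
    if "Q \<in> W" "finite F" "F \<subseteq> W" for Q F
  proof -
    have "(\<Sum>S\<in>F. sidelen S powr a / long_dist Q S powr b) \<le> C * sidelen Q powr (a - b)"
      unfolding C_def by (rule sum_long_dist_kernel_le_if_packing[OF packing CG \<open>0 < b\<close> ab that])
    also have "\<dots> \<le> (C + 1) * sidelen Q powr (a - b)"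
      by (simp add: distrib_right)
    finally show ?thesis .
  qed
  ultimately show ?thesis
    by (rule that)
qed

end

lemma whitney_domain_if_whitney_covering:
  assumes "lipschitz_domain \<Omega>" "whitney_covering \<Omega> W" "W \<noteq> {}"
  obtains CW where "whitney_domain \<Omega> W CW"
proof -
  obtain CW where CW: "0 < CW"
    "\<forall>Q\<in>W. CW * sidelen Q \<le> setdist Q (frontier \<Omega>) \<and> setdist Q (frontier \<Omega>) \<le> 4 * CW * sidelen Q"
    using assms(2) unfolding whitney_covering_def by blast
  have "frontier \<Omega> \<noteq> {}"
  proof
    assume "frontier \<Omega> = {}"
    moreover obtain Q where Q: "Q \<in> W"
      using assms(3) by blast
    moreover have "0 < sidelen Q"
      using Q assms(2) by (auto simp: whitney_covering_def dyadic_cube_def sidelen_dyad_pos)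
    ultimately show False
      \<comment> \<open>\<open>setdist Q {} = 0\<close>, so the Whitney condition would force \<open>CW * sidelen Q \<le> 0\<close>\<close>
      using CW by (force simp: mult_le_0_iff)
  qed
  then have "whitney_domain \<Omega> W CW"
    using assms(1,2) CW lipschitz_domain_imp_charts[OF assms(1)]
    by unfold_locales (auto simp: lipschitz_domain_def whitney_covering_def)
  then show ?thesis
    by (rule that)
qed

theorem lemma3p13:
  fixes \<Omega> :: "'a::euclidean_space set" and W :: "'a set set" and a b :: real
  assumes "lipschitz_domain \<Omega>" and "whitney_covering \<Omega> W"
    and "real DIM('a) - 1 < a" and "a < b"
  shows "\<exists>C>0. \<forall>Q\<in>W.
           (\<lambda>S. sidelen S powr a / long_dist Q S powr b) summable_on W \<and>
           (\<Sum>\<^sub>\<infinity>S\<in>W. sidelen S powr a / long_dist Q S powr b) \<le> C * sidelen Q powr (a - b)"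
proof (cases "W = {}")
  case True
  then show ?thesis
    by (intro exI[of _ 1]) simp
next
  case False
  obtain CW where "whitney_domain \<Omega> W CW"
    using assms(1,2) False by (rule whitney_domain_if_whitney_covering)
  then interpret whitney_domain \<Omega> W CW .
  obtain C where "0 < C"
    and finite_sums: "\<And>Q F. Q \<in> W \<Longrightarrow> finite F \<Longrightarrow> F \<subseteq> W \<Longrightarrow>
       (\<Sum>S\<in>F. sidelen S powr a / long_dist Q S powr b) \<le> C * sidelen Q powr (a - b)"
    using sum_long_dist_kernel_le[OF assms(3,4)] by blast
  then show ?thesis
    by (intro exI[of _ C] conjI ballI summable_on_and_infsum_le_if_finite_sums_le) auto
qed

end
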